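(* Let $\Phi$ be a finite NCIFS on $X\subset\mathbb R^d$, let $t_0>0$, and let $(\alpha_n)$ be a sequence with $\alpha_n\ge1$ and $\alpha_n\to\infty$. Then there exist sets $I^{(n)}_f\subset I^{(n)}$ such that the subsystem $\Phi_f$, with $\Phi_f^{(n)}=(\phi^{(n)}_a)_{a\in I^{(n)}_f}$, has the following properties: - $\underline P^{\Phi_f}(t)=\underline P^{\Phi}(t)$ for all $t\ge t_0$; - for all $n$, \[\rho_n(\Phi_f):=\max_{a,b\in I^{(n)}_f}\frac{\|D\phi^{(n)}_a\|}{\|D\phi^{(n)}_b\|}\le\alpha_n\,(\# I^{(n)})^{1/t_0}.\]
   Context: Fix $d\in\mathbb N$ and a compact set $X\subset\mathbb R^d$ equal to the closure of its interior, such that $\partial X$ is smooth or $X$ is convex. $\|D\phi\|:=\sup_{x\in X}|\phi'(x)|$ for a conformal map $\phi$. An NCIFS $\Phi$ on $X$ is a sequence $\Phi^{(j)}=(\phi^{(j)}_i:X\to X)_{i\in I^{(j)}}$, $j\ge1$, of families indexed by finite or countably infinite sets, satisfying: - (open set condition) images of $\operatorname{int}X$ under distinct maps of the same $\Phi^{(j)}$ are disjoint; - (conformality) there is an open connected $V\supset X$ such that all maps extend to $C^1$ conformal diffeomorphisms of $V$ into $V$; - (bounded distortion) there is $K\ge1$ with $|\phi'(x)|\le K|\phi'(y)|$ for $x,y\in V$ and every composition $\phi=\phi^{(k)}_{\omega_k}\circ\cdots\circ\phi^{(l)}_{\omega_l}$, $k\le l$; - (uniform contraction) $\|D\phi^{(j)}_i\|\le\eta<1$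 for all $i,j$. Finite means every $I^{(j)}$ is finite. For $\omega\in I^n=\prod_{j\le n}I^{(j)}$ let $\phi_\omega=\phi^{(1)}_{\omega_1}\circ\cdots\circ\phi^{(n)}_{\omega_n}$. For a system $\Psi$, $Z^\Psi_n(t)=\sum_{\omega\in I^n}\|D\phi_\omega\|^t$ over its words, and $\underline P^\Psi(t)=\liminf_n\frac1n\log Z^\Psi_n(t)$. *)

theory Defs
  imports "HOL-Analysis.Analysis"
begin

(* C^k regularity on an (open) set U, via Frechet derivatives whose directional
   components are again C^(k-1).  In finite dimensions this is the usual C^k. *)
fun Ck_on :: "nat \<Rightarrow> ('a::euclidean_space \<Rightarrow> 'b::real_normed_vector) \<Rightarrow> 'a set \<Rightarrow> bool" where
  "Ck_on 0 f U = continuous_on U f"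
| "Ck_on (Suc k) f U =
     (\<exists>f'. (\<forall>x\<in>U. (f has_derivative f' x) (at x)) \<and> (\<forall>v. Ck_on k (\<lambda>x. f' x v) U))"

definition smooth_on :: "('a::euclidean_space \<Rightarrow> 'b::real_normed_vector) \<Rightarrow> 'a set \<Rightarrow> bool" where
  "smooth_on f U \<longleftrightarrow> (\<forall>k. Ck_on k f U)"

definition smooth_boundary :: "'a::euclidean_space set \<Rightarrow> bool" where
  "smooth_boundary X \<longleftrightarrow>
     (\<forall>p\<in>frontier X. \<exists>U (g::'a \<Rightarrow> real). open U \<and> p \<in> U \<and> smooth_on g U \<and>
        frechet_derivative g (at p) \<noteq> (\<lambda>v. 0) \<and> X \<inter> U = {x\<in>U. g x \<le> 0})"

definition conf_deriv :: "('a::euclidean_space \<Rightarrow> 'a) \<Rightarrow> 'a \<Rightarrow> real" where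
  "conf_deriv f x = onorm (frechet_derivative f (at x))"

definition normD :: "'a::euclidean_space set \<Rightarrow> ('a \<Rightarrow> 'a) \<Rightarrow> real" where
  "normD X f = (SUP x\<in>X. conf_deriv f x)"

(* C^1 conformal diffeomorphism of V into V (injective, C^1, derivative everywhere
   a nonzero similarity; the inverse is then C^1 by the inverse function theorem) *)
definition conformal_C1_into :: "'a::euclidean_space set \<Rightarrow> ('a \<Rightarrow> 'a) \<Rightarrow> bool" where
  "conformal_C1_into V f \<longleftrightarrow>
     Ck_on 1 f V \<and> inj_on f V \<and> f ` V \<subseteq> V \<and>
     (\<forall>x\<in>V. \<exists>c>0. \<forall>v. norm (frechet_derivative f (at x) v) = c * norm v)"

primrec wcomp :: "(nat \<Rightarrow> 'i \<Rightarrow> 'a \<Rightarrow> 'a) \<Rightarrow> (nat \<Rightarrow> 'i) \<Rightarrow> nat \<Rightarrow> nat \<Rightarrow> 'a \<Rightarrow> 'a" where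
  "wcomp Phi w k 0 = id"
| "wcomp Phi w k (Suc m) = wcomp Phi w k m \<circ> Phi (k + m) (w (k + m))"

definition NCIFS :: "'a::euclidean_space set \<Rightarrow> (nat \<Rightarrow> 'i set) \<Rightarrow> (nat \<Rightarrow> 'i \<Rightarrow> 'a \<Rightarrow> 'a) \<Rightarrow> bool" where
  "NCIFS X I Phi \<longleftrightarrow>
     (\<forall>j\<ge>1. I j \<noteq> {} \<and> countable (I j) \<and> (\<forall>i\<in>I j. Phi j i ` X \<subseteq> X)) \<and>
     (\<forall>j\<ge>1. \<forall>a\<in>I j. \<forall>b\<in>I j. a \<noteq> b \<longrightarrow>
        Phi j a ` interior X \<inter> Phi j b ` interior X = {}) \<and>
     (\<exists>V. open V \<and> connected V \<and> X \<subseteq> V \<and>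
        (\<forall>j\<ge>1. \<forall>i\<in>I j. conformal_C1_into V (Phi j i)) \<and>
        (\<exists>K\<ge>1. \<forall>k\<ge>1. \<forall>m\<ge>1. \<forall>w. (\<forall>i. k \<le> i \<and> i < k + m \<longrightarrow> w i \<in> I i) \<longrightarrow>
            (\<forall>x\<in>V. \<forall>y\<in>V. conf_deriv (wcomp Phi w k m) x \<le> K * conf_deriv (wcomp Phi w k m) y))) \<and>
     (\<exists>\<eta><1. \<forall>j\<ge>1. \<forall>i\<in>I j. normD X (Phi j i) \<le> \<eta>)"

definition Zn :: "'a::euclidean_space set \<Rightarrow> (nat \<Rightarrow> 'i set) \<Rightarrow> (nat \<Rightarrow> 'i \<Rightarrow> 'a \<Rightarrow> 'a) \<Rightarrow> nat \<Rightarrow> real \<Rightarrow> real" where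
  "Zn X I Phi n t = (\<Sum>w\<in>Pi\<^sub>E {1..n} I. normD X (wcomp Phi w 1 n) powr t)"

definition lower_pressure :: "'a::euclidean_space set \<Rightarrow> (nat \<Rightarrow> 'i set) \<Rightarrow> (nat \<Rightarrow> 'i \<Rightarrow> 'a \<Rightarrow> 'a) \<Rightarrow> real \<Rightarrow> ereal" where
  "lower_pressure X I Phi t = liminf (\<lambda>n. ereal (ln (Zn X I Phi n t) / real n))"

definition rho :: "'a::euclidean_space set \<Rightarrow> (nat \<Rightarrow> 'i set) \<Rightarrow> (nat \<Rightarrow> 'i \<Rightarrow> 'a \<Rightarrow> 'a) \<Rightarrow> nat \<Rightarrow> real" where
  "rho X I Phi n = Max {normD X (Phi n a) / normD X (Phi n b) | a b. a \<in> I n \<and> b \<in> I n}"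

end

theory Submission
  imports Defs
begin

text \<open>Keep at level n only the letters a whose norm ||D phi_a|| is within the factor
  c_n = alpha_n (#I_n)^(1/t0) of the largest one; this caps rho_n by c_n. By bounded distortion the
  norm of a word is quasi-multiplicative, so replacing its letter at level r by a kept letter b_r of
  maximal norm changes it by at most the factor K^4 ||D phi_a|| / ||D phi_b_r|| < K^4 / c_r. Hence,
  for t >= t0, the words with a discarded letter at level r carry at most the fraction
  e_r = #I_r (K^4 / c_r)^t <= (K^4 / alpha_r)^t of Z_n(t), and pruning the levels one at a time
  gives Z_n(t) <= prod_(r<=n) (1 + e_r) Z_n^f(t). As e_r tends to 0, the Cesaro means of
  log (1 + e_r) vanish, so the lower pressures agree.\<close>

section \<open>Conformal self-maps and their compositions\<close>

lemma onorm_eq_of_norm_eq_mult: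
  fixes L :: "'a::euclidean_space \<Rightarrow> 'b::real_normed_vector"
  assumes "bounded_linear L" "\<And>v. norm (L v) = c * norm v"
  shows "onorm L = c"
proof (rule antisym)
  show "onorm L \<le> c" by (rule onorm_le) (simp add: assms(2))
next
  obtain b :: 'a where "b \<in> Basis" using nonempty_Basis by blast
  then have nb: "norm b = 1" by simp
  have "c = norm (L b)" using assms(2) nb by simp
  also have "\<dots> \<le> onorm L * norm b" by (rule onorm[OF assms(1)])
  finally show "c \<le> onorm L" using nb by simp
qed

lemma conf_deriv_eq:
  assumes "(f has_derivative L) (at x)" "\<And>v. norm (L v) = c * norm v"
  shows "conf_deriv f x = c"
  unfolding conf_deriv_def frechet_derivative_at[OF assms(1), symmetric]
  using assms by (intro onorm_eq_of_norm_eq_mult) (auto dest: has_derivative_bounded_linear)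

definition conformal_self_map :: "'a::euclidean_space set \<Rightarrow> ('a \<Rightarrow> 'a) \<Rightarrow> bool" where
  "conformal_self_map V g \<longleftrightarrow> g ` V \<subseteq> V \<and>
     (\<forall>x\<in>V. (g has_derivative frechet_derivative g (at x)) (at x) \<and> conf_deriv g x > 0 \<and>
        (\<forall>v. norm (frechet_derivative g (at x) v) = conf_deriv g x * norm v))"

lemma conf_deriv_id: "conf_deriv id x = 1"
  by (rule conf_deriv_eq[of _ id]) (simp_all add: id_def)

lemma conformal_self_map_id: "conformal_self_map V id"
proof -
  have "(id has_derivative id) (at x)" for x :: 'a
    by (simp add: id_def)
  then show ?thesis
    unfolding conformal_self_map_def conf_deriv_id by (simp add: frechet_derivative_at[symmetric])
qed

lemma conformal_self_map_if_conformal_C1_into: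
  assumes "conformal_C1_into V f"
  shows "conformal_self_map V f"
  unfolding conformal_self_map_def
proof (intro conjI ballI)
  show "f ` V \<subseteq> V" using assms unfolding conformal_C1_into_def by simp
  fix x assume x: "x \<in> V"
  show df: "(f has_derivative frechet_derivative f (at x)) (at x)"
    using assms x unfolding conformal_C1_into_def by (metis Ck_on.simps(2) One_nat_def frechet_derivative_at)
  obtain c where "c > 0" and c: "\<And>v. norm (frechet_derivative f (at x) v) = c * norm v"
    using assms x unfolding conformal_C1_into_def by blast
  moreover have "conf_deriv f x = c" using df c by (rule conf_deriv_eq)
  ultimately show "conf_deriv f x > 0"
    "\<forall>v. norm (frechet_derivative f (at x) v) = conf_deriv f x * norm v" by simp_all
qed

lemma
  assumes f: "conformal_self_map V f" and g: "conformal_self_map V g"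
  shows conformal_self_map_comp: "conformal_self_map V (f \<circ> g)"
    and conf_deriv_comp: "x \<in> V \<Longrightarrow> conf_deriv (f \<circ> g) x = conf_deriv f (g x) * conf_deriv g x"
proof -
  have chain: "((f \<circ> g) has_derivative frechet_derivative (f \<circ> g) (at x)) (at x) \<and>
      conf_deriv (f \<circ> g) x = conf_deriv f (g x) * conf_deriv g x \<and>
      (\<forall>v. norm (frechet_derivative (f \<circ> g) (at x) v) = conf_deriv (f \<circ> g) x * norm v)"
    if x: "x \<in> V" for x
  proof -
    have "g x \<in> V" using g x unfolding conformal_self_map_def by auto
    then have dg: "(g has_derivative frechet_derivative g (at x)) (at x)"
      and df: "(f has_derivative frechet_derivative f (at (g x))) (at (g x))"
      and ng: "\<And>v. norm (frechet_derivative g (at x) v) = conf_deriv g x * norm v"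
      and nf: "\<And>v. norm (frechet_derivative f (at (g x)) v) = conf_deriv f (g x) * norm v"
      using f g x unfolding conformal_self_map_def by auto
    define L where "L = frechet_derivative f (at (g x)) \<circ> frechet_derivative g (at x)"
    have dc: "((f \<circ> g) has_derivative L) (at x)"
      unfolding L_def by (rule diff_chain_at[OF dg df])
    have nL: "norm (L v) = (conf_deriv f (g x) * conf_deriv g x) * norm v" for v
      unfolding L_def using nf ng by simp
    show ?thesis
      using dc nL conf_deriv_eq[OF dc nL] frechet_derivative_at[OF dc] by simp
  qed
  have "(f \<circ> g) ` V \<subseteq> V" "conf_deriv f (g x) > 0" "conf_deriv g x > 0" if "x \<in> V" for x
    using f g that unfolding conformal_self_map_def by (auto simp: image_subset_iff)
  then show "conformal_self_map V (f \<circ> g)"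
    unfolding conformal_self_map_def using chain by auto
  show "x \<in> V \<Longrightarrow> conf_deriv (f \<circ> g) x = conf_deriv f (g x) * conf_deriv g x"
    using chain by blast
qed

lemma wcomp_add: "wcomp Phi w k (m + m') = wcomp Phi w k m \<circ> wcomp Phi w (k + m) m'"
  by (induction m') (simp_all add: algebra_simps comp_assoc)

lemma wcomp_cong:
  "(\<And>i. k \<le> i \<Longrightarrow> i < k + m \<Longrightarrow> w i = w' i) \<Longrightarrow> wcomp Phi w k m = wcomp Phi w' k m"
  by (induction m) auto

lemma conformal_self_map_wcomp:
  "(\<And>i. k \<le> i \<Longrightarrow> i < k + m \<Longrightarrow> conformal_self_map V (Phi i (w i))) \<Longrightarrow>
    conformal_self_map V (wcomp Phi w k m)"
  by (induction m) (auto simp: conformal_self_map_id intro: conformal_self_map_comp)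

lemma wcomp_image_subset:
  "(\<And>i. k \<le> i \<Longrightarrow> i < k + m \<Longrightarrow> Phi i (w i) ` X \<subseteq> X) \<Longrightarrow> wcomp Phi w k m ` X \<subseteq> X"
  by (induction m) (auto simp: image_subset_iff)

lemma sum_PiE_pick_coordinate:
  assumes "r \<in> S"
  shows "(\<Sum>w\<in>Pi\<^sub>E S J. g w) = (\<Sum>a\<in>J r. \<Sum>u\<in>Pi\<^sub>E (S - {r}) J. g (u(r := a)))"
proof -
  have S: "S = insert r (S - {r})" using assms by blast
  have "(\<Sum>w\<in>Pi\<^sub>E S J. g w) = (\<Sum>w\<in>(\<lambda>(a, u). u(r := a)) ` (J r \<times> Pi\<^sub>E (S - {r}) J). g w)"
    by (subst S, subst PiE_insert_eq) simp
  also have "\<dots> = (\<Sum>(a, u)\<in>J r \<times> Pi\<^sub>E (S - {r}) J. g (u(r := a)))"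
    by (subst sum.reindex) (auto intro: inj_combinator simp: case_prod_beta)
  finally show ?thesis by (simp add: sum.cartesian_product)
qed

lemma cesaro_mean_tendsto_zero:
  fixes e :: "nat \<Rightarrow> real"
  assumes lim: "e \<longlonglongrightarrow> 0" and nonneg: "\<And>r. e r \<ge> 0"
  shows "(\<lambda>n. (\<Sum>r\<in>{1..n}. e r) / real n) \<longlonglongrightarrow> 0"
proof (rule order_tendstoI)
  show "eventually (\<lambda>n. a < (\<Sum>r\<in>{1..n}. e r) / real n) sequentially" if "a < 0" for a
    using that nonneg by (intro always_eventually allI) (simp add: sum_nonneg less_le_trans)
  fix \<delta> :: real assume "\<delta> > 0"
  then obtain N where N: "\<And>r. r \<ge> N \<Longrightarrow> e r < \<delta> / 2"
    using order_tendstoD(2)[OF lim, of "\<delta> / 2"] by (auto simp: eventually_sequentially)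
  define S where "S = (\<Sum>r\<in>{1..N}. e r)"
  obtain M :: nat where M: "real M > 2 * S / \<delta>" using reals_Archimedean2 by blast
  show "eventually (\<lambda>n. (\<Sum>r\<in>{1..n}. e r) / real n < \<delta>) sequentially"
    unfolding eventually_sequentially
  proof (intro exI[of _ "max (Suc N) (Suc M)"] allI impI)
    fix n assume n: "n \<ge> max (Suc N) (Suc M)"
    have "{1..n} = {1..N} \<union> {N<..n}" "{1..N} \<inter> {N<..n} = {}" using n by auto
    then have "(\<Sum>r\<in>{1..n}. e r) = S + (\<Sum>r\<in>{N<..n}. e r)"
      unfolding S_def by (simp add: sum.union_disjoint)
    also have "(\<Sum>r\<in>{N<..n}. e r) \<le> real (card {N<..n}) * (\<delta> / 2)"
      by (rule sum_bounded_above) (use N in \<open>auto simp: less_imp_le\<close>)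
    also have "real (card {N<..n}) * (\<delta> / 2) \<le> real n * (\<delta> / 2)"
      using \<open>\<delta> > 0\<close> by (intro mult_right_mono) auto
    also have "S < real n * (\<delta> / 2)"
    proof -
      have "\<delta> * real M \<le> \<delta> * real n" using n \<open>\<delta> > 0\<close> by simp
      moreover have "2 * S < \<delta> * real M" using M \<open>\<delta> > 0\<close> by (simp add: field_simps)
      ultimately show ?thesis by (simp add: field_simps)
    qed
    finally show "(\<Sum>r\<in>{1..n}. e r) / real n < \<delta>"
      using n by (simp add: field_simps)
  qed
qed

lemma liminf_ereal_eq_if_gap_tendsto_zero:
  fixes a b c :: "nat \<Rightarrow> real"
  assumes "eventually (\<lambda>n. a n \<le> b n) sequentially"
    and "eventually (\<lambda>n. b n \<le> a n + c n) sequentially" and "c \<longlonglongrightarrow> 0"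
  shows "liminf (\<lambda>n. ereal (b n)) = liminf (\<lambda>n. ereal (a n))"
proof (rule antisym)
  show "liminf (\<lambda>n. ereal (a n)) \<le> liminf (\<lambda>n. ereal (b n))"
    by (rule Liminf_mono) (use assms(1) in \<open>auto elim: eventually_mono\<close>)
  show "liminf (\<lambda>n. ereal (b n)) \<le> liminf (\<lambda>n. ereal (a n))"
  proof (rule ereal_le_epsilon2)
    fix \<delta> :: real assume "\<delta> > 0"
    then have "eventually (\<lambda>n. ereal (b n) \<le> ereal (a n) + ereal \<delta>) sequentially"
      using eventually_conj[OF assms(2) order_tendstoD(2)[OF assms(3) \<open>\<delta> > 0\<close>]]
      by (auto elim: eventually_mono)
    then have "liminf (\<lambda>n. ereal (b n)) \<le> liminf (\<lambda>n. ereal (a n) + ereal \<delta>)"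
      by (rule Liminf_mono)
    also have "\<dots> = liminf (\<lambda>n. ereal (a n)) + ereal \<delta>"
      by (rule Liminf_add_ereal_right) auto
    finally show "liminf (\<lambda>n. ereal (b n)) \<le> liminf (\<lambda>n. ereal (a n)) + ereal \<delta>" .
  qed
qed

lemma mult_powr_div_root_le:
  fixes N x t t0 :: real
  assumes "N \<ge> 1" "x \<ge> 0" "0 < t0" "t0 \<le> t"
  shows "N * (x / N powr (1 / t0)) powr t \<le> x powr t"
proof -
  have "N \<le> N powr (t / t0)"
    using powr_mono[of 1 "t / t0" N] assms by simp
  then have "N * (x / N powr (1 / t0)) powr t \<le> N powr (t / t0) * (x / N powr (1 / t0)) powr t"
    by (rule mult_right_mono) simp
  also have "\<dots> = x powr t"
    using assms by (simp add: powr_divide powr_powr)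
  finally show ?thesis .
qed

lemma one_le_mult_card_powr:
  assumes "\<alpha> \<ge> 1" "finite A" "A \<noteq> {}" "t0 > 0"
  shows "1 \<le> \<alpha> * real (card A) powr (1 / t0)"
proof -
  have "real (card A) \<ge> 1" using assms(2,3) by (simp add: Suc_leI card_gt_0_iff)
  then have root: "real (card A) powr (1 / t0) \<ge> 1"
    using assms(4) by (intro ge_one_powr_ge_zero) auto
  show ?thesis using mult_mono[OF assms(1) root] assms(1) by simp
qed

section \<open>Finite systems with bounded distortion\<close>

locale finite_ncifs =
  fixes X :: "'a::euclidean_space set" and I :: "nat \<Rightarrow> 'i set"
    and Phi :: "nat \<Rightarrow> 'i \<Rightarrow> 'a \<Rightarrow> 'a" and V :: "'a set" and K :: real
  assumes X_nonempty: "X \<noteq> {}" and X_subset_V: "X \<subseteq> V"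
    and finite_I: "\<And>j. j \<ge> 1 \<Longrightarrow> finite (I j)" and I_nonempty: "\<And>j. j \<ge> 1 \<Longrightarrow> I j \<noteq> {}"
    and maps_X: "\<And>j i. j \<ge> 1 \<Longrightarrow> i \<in> I j \<Longrightarrow> Phi j i ` X \<subseteq> X"
    and conformal: "\<And>j i. j \<ge> 1 \<Longrightarrow> i \<in> I j \<Longrightarrow> conformal_self_map V (Phi j i)"
    and K_ge_1: "K \<ge> 1"
    and distortion: "\<And>k m w x y. k \<ge> 1 \<Longrightarrow> m \<ge> 1 \<Longrightarrow> (\<forall>i. k \<le> i \<and> i < k + m \<longrightarrow> w i \<in> I i) \<Longrightarrow>
        x \<in> V \<Longrightarrow> y \<in> V \<Longrightarrow> conf_deriv (wcomp Phi w k m) x \<le> K * conf_deriv (wcomp Phi w k m) y"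
begin

context
  fixes k m :: nat and w :: "nat \<Rightarrow> 'i"
  assumes k: "k \<ge> 1" and word: "w \<in> Pi {k..<k + m} I"
begin

lemma conformal_self_map_word: "conformal_self_map V (wcomp Phi w k m)"
  using k word conformal by (intro conformal_self_map_wcomp) (auto simp: Pi_iff)

lemma word_image_subset: "wcomp Phi w k m ` X \<subseteq> X"
  using k word maps_X by (intro wcomp_image_subset) (auto simp: Pi_iff)

lemma conf_deriv_word_pos: "x \<in> X \<Longrightarrow> conf_deriv (wcomp Phi w k m) x > 0"
  using conformal_self_map_word X_subset_V unfolding conformal_self_map_def by auto

lemma conf_deriv_word_distortion:
  assumes "x \<in> X" "y \<in> X"
  shows "conf_deriv (wcomp Phi w k m) x \<le> K * conf_deriv (wcomp Phi w k m) y"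
proof (cases "m = 0")
  case True
  then show ?thesis using K_ge_1 by (simp add: conf_deriv_id)
next
  case False
  then show ?thesis using distortion[of k m w x y] k word assms X_subset_V by (auto simp: Pi_iff)
qed

lemma conf_deriv_le_normD: "x \<in> X \<Longrightarrow> conf_deriv (wcomp Phi w k m) x \<le> normD X (wcomp Phi w k m)"
  unfolding normD_def using conf_deriv_word_distortion X_nonempty
  by (intro cSUP_upper bdd_aboveI2) (auto simp: ex_in_conv[symmetric])

lemma normD_le_distortion: "x \<in> X \<Longrightarrow> normD X (wcomp Phi w k m) \<le> K * conf_deriv (wcomp Phi w k m) x"
  unfolding normD_def using conf_deriv_word_distortion X_nonempty by (intro cSUP_least) auto

lemma normD_word_pos: "normD X (wcomp Phi w k m) > 0"
  using X_nonempty conf_deriv_le_normD conf_deriv_word_pos by (force intro: less_le_trans)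

end

lemma normD_letter_pos: "j \<ge> 1 \<Longrightarrow> i \<in> I j \<Longrightarrow> normD X (Phi j i) > 0"
  using normD_word_pos[of j "\<lambda>_. i" 1] by simp

context
  fixes k m m' :: nat and w :: "nat \<Rightarrow> 'i"
  assumes k: "k \<ge> 1" and word: "w \<in> Pi {k..<k + (m + m')} I"
begin

lemma prefix_word: "w \<in> Pi {k..<k + m} I" and suffix_word: "w \<in> Pi {k + m..<k + m + m'} I"
  using word by (auto simp: Pi_iff)

lemma conf_deriv_wcomp_add:
  "x \<in> X \<Longrightarrow> conf_deriv (wcomp Phi w k (m + m')) x =
    conf_deriv (wcomp Phi w k m) (wcomp Phi w (k + m) m' x) * conf_deriv (wcomp Phi w (k + m) m') x"
  unfolding wcomp_add using X_subset_V k
  by (intro conf_deriv_comp[of V] conformal_self_map_word prefix_word suffix_word) auto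

lemma normD_wcomp_add_le:
  "normD X (wcomp Phi w k (m + m')) \<le> normD X (wcomp Phi w k m) * normD X (wcomp Phi w (k + m) m')"
  unfolding normD_def[of X "wcomp Phi w k (m + m')"]
proof (rule cSUP_least[OF X_nonempty])
  fix x assume x: "x \<in> X"
  have hx: "wcomp Phi w (k + m) m' x \<in> X"
    using word_image_subset[OF _ suffix_word] k x by auto
  show "conf_deriv (wcomp Phi w k (m + m')) x \<le> normD X (wcomp Phi w k m) * normD X (wcomp Phi w (k + m) m')"
    unfolding conf_deriv_wcomp_add[OF x] using k x hx
    by (intro mult_mono conf_deriv_le_normD prefix_word suffix_word less_imp_le[OF conf_deriv_word_pos]
        less_imp_le[OF normD_word_pos]) auto
qed

lemma normD_wcomp_add_ge:
  "normD X (wcomp Phi w k m) * normD X (wcomp Phi w (k + m) m') \<le> K\<^sup>2 * normD X (wcomp Phi w k (m + m'))"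
proof -
  obtain x where x: "x \<in> X" using X_nonempty by blast
  have hx: "wcomp Phi w (k + m) m' x \<in> X"
    using word_image_subset[OF _ suffix_word] k x by auto
  have "normD X (wcomp Phi w k m) * normD X (wcomp Phi w (k + m) m')
      \<le> (K * conf_deriv (wcomp Phi w k m) (wcomp Phi w (k + m) m' x)) * (K * conf_deriv (wcomp Phi w (k + m) m') x)"
    using k x hx
    by (intro mult_mono normD_le_distortion prefix_word suffix_word less_imp_le[OF normD_word_pos]
        mult_nonneg_nonneg less_imp_le[OF conf_deriv_word_pos]) (auto intro: order.trans[OF zero_le_one K_ge_1])
  also have "\<dots> = K\<^sup>2 * conf_deriv (wcomp Phi w k (m + m')) x"
    by (simp add: conf_deriv_wcomp_add[OF x] power2_eq_square)
  also have "\<dots> \<le> K\<^sup>2 * normD X (wcomp Phi w k (m + m'))"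
    using k x word by (intro mult_left_mono conf_deriv_le_normD) auto
  finally show ?thesis .
qed

end

lemma normD_word_split_at_letter:
  assumes w: "w \<in> Pi {1..n} I" and r: "r \<in> {1..n}"
  defines "P \<equiv> normD X (wcomp Phi w 1 (r - 1))" and "S \<equiv> normD X (wcomp Phi w (r + 1) (n - r))"
  shows "normD X (wcomp Phi w 1 n) \<le> P * (normD X (Phi r (w r)) * S)"
    and "P * (normD X (Phi r (w r)) * S) \<le> K ^ 4 * normD X (wcomp Phi w 1 n)"
proof -
  have r1: "1 + (r - 1) = r" using r by auto
  have n: "wcomp Phi w 1 n = wcomp Phi w 1 ((r - 1) + (1 + (n - r)))"
    using r by (intro arg_cong[where f="wcomp Phi w 1"]) auto
  have word: "w \<in> Pi {1..<1 + ((r - 1) + (1 + (n - r)))} I"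
    using w r by (auto simp: Pi_iff)
  have tail: "w \<in> Pi {r..<r + (1 + (n - r))} I"
    using w r by (auto simp: Pi_iff)
  have P0: "P \<ge> 0"
    using normD_word_pos[of 1 w "r - 1"] w r unfolding P_def by (auto simp: Pi_iff)
  have "normD X (wcomp Phi w 1 n) \<le> P * normD X (wcomp Phi w r (1 + (n - r)))"
    using normD_wcomp_add_le[OF _ word] unfolding P_def by (simp only: n r1 order_refl)
  also have "\<dots> \<le> P * (normD X (Phi r (w r)) * S)"
    using normD_wcomp_add_le[OF _ tail] r P0 unfolding S_def by (intro mult_left_mono) (auto simp: add.commute)
  finally show "normD X (wcomp Phi w 1 n) \<le> P * (normD X (Phi r (w r)) * S)" .
  have "P * (normD X (Phi r (w r)) * S) \<le> P * (K\<^sup>2 * normD X (wcomp Phi w r (1 + (n - r))))"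
    using normD_wcomp_add_ge[OF _ tail] r P0 unfolding S_def by (intro mult_left_mono) (auto simp: add.commute)
  also have "\<dots> \<le> K\<^sup>2 * (K\<^sup>2 * normD X (wcomp Phi w 1 n))"
    using mult_left_mono[OF normD_wcomp_add_ge[OF _ word], of "K\<^sup>2"] unfolding P_def
    by (simp only: n r1 order_refl zero_le_power2 simp_thms) (simp add: mult.left_commute)
  finally show "P * (normD X (Phi r (w r)) * S) \<le> K ^ 4 * normD X (wcomp Phi w 1 n)"
    by (simp add: power4_eq_xxxx power2_eq_square mult.assoc)
qed

lemma normD_replace_letter:
  assumes w: "w \<in> Pi {1..n} I" and r: "r \<in> {1..n}" and a: "a \<in> I r" and b: "b \<in> I r"
  shows "normD X (wcomp Phi (w(r := a)) 1 n)
    \<le> K ^ 4 * (normD X (Phi r a) / normD X (Phi r b)) * normD X (wcomp Phi (w(r := b)) 1 n)"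
proof -
  define P where "P = normD X (wcomp Phi w 1 (r - 1))"
  define S where "S = normD X (wcomp Phi w (r + 1) (n - r))"
  have prefix: "normD X (wcomp Phi (w(r := c)) 1 (r - 1)) = P" for c
    unfolding P_def by (rule arg_cong[where f="normD X"], rule wcomp_cong) auto
  have suffix: "normD X (wcomp Phi (w(r := c)) (r + 1) (n - r)) = S" for c
    unfolding S_def by (rule arg_cong[where f="normD X"], rule wcomp_cong) auto
  have split: "normD X (wcomp Phi (w(r := c)) 1 n) \<le> P * (normD X (Phi r c) * S)"
    "P * (normD X (Phi r c) * S) \<le> K ^ 4 * normD X (wcomp Phi (w(r := c)) 1 n)" if "c \<in> I r" for c
    using normD_word_split_at_letter[of "w(r := c)" n r] w r that
    unfolding prefix suffix by (auto simp: Pi_iff)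
  have B0: "normD X (Phi r b) > 0" using normD_letter_pos r b by simp
  have ratio: "normD X (Phi r a) / normD X (Phi r b) \<ge> 0"
    using normD_letter_pos[of r a] B0 a r by simp
  have "normD X (wcomp Phi (w(r := a)) 1 n) \<le> (normD X (Phi r a) / normD X (Phi r b)) * (P * (normD X (Phi r b) * S))"
    using split(1)[OF a] B0 by (simp add: field_simps)
  also have "\<dots> \<le> (normD X (Phi r a) / normD X (Phi r b)) * (K ^ 4 * normD X (wcomp Phi (w(r := b)) 1 n))"
    using split(2)[OF b] ratio by (rule mult_left_mono)
  finally show ?thesis by (simp add: mult_ac)
qed

lemma normD_replace_letter_powr:
  assumes "t \<ge> 0" "w \<in> Pi {1..n} I" "r \<in> {1..n}" "a \<in> I r" "b \<in> I r"
  shows "normD X (wcomp Phi (w(r := a)) 1 n) powr t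
    \<le> (K ^ 4 * (normD X (Phi r a) / normD X (Phi r b))) powr t * normD X (wcomp Phi (w(r := b)) 1 n) powr t"
proof -
  have "w(r := a) \<in> Pi {1..<1 + n} I" using assms by auto
  then have "normD X (wcomp Phi (w(r := a)) 1 n) \<ge> 0"
    using normD_word_pos[of 1 "w(r := a)" n] by simp
  then show ?thesis
    using normD_replace_letter[OF assms(2-5)] assms(1) by (simp add: powr_mono2 flip: powr_mult)
qed

lemma Zn_remove_letters:
  assumes t: "t \<ge> 0" and r: "r \<in> {1..n}"
    and J: "\<And>i. i \<in> {1..n} \<Longrightarrow> J i \<subseteq> I i"
    and J': "\<And>i. i \<noteq> r \<Longrightarrow> J' i = J i" "J' r \<subseteq> J r" and b: "b \<in> J' r"
    and removed: "(\<Sum>a\<in>J r - J' r. (K ^ 4 * (normD X (Phi r a) / normD X (Phi r b))) powr t) \<le> e"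
  shows "Zn X J Phi n t \<le> (1 + e) * Zn X J' Phi n t"
proof -
  define P where "P = Pi\<^sub>E ({1..n} - {r}) J"
  define F where "F a = (\<Sum>u\<in>P. normD X (wcomp Phi (u(r := a)) 1 n) powr t)" for a
  define c where "c a = (K ^ 4 * (normD X (Phi r a) / normD X (Phi r b))) powr t" for a
  have Zn_J: "Zn X J Phi n t = (\<Sum>a\<in>J r. F a)"
    unfolding Zn_def F_def P_def using r by (rule sum_PiE_pick_coordinate)
  have "Pi\<^sub>E ({1..n} - {r}) J' = P"
    unfolding P_def using J'(1) by (intro PiE_cong) auto
  then have Zn_J': "Zn X J' Phi n t = (\<Sum>a\<in>J' r. F a)"
    unfolding Zn_def F_def using r by (simp only: sum_PiE_pick_coordinate)
  have fin: "finite (J r)" using J[OF r] finite_I r by (auto intro: finite_subset)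
  have F_nonneg: "F a \<ge> 0" for a unfolding F_def by (simp add: sum_nonneg)
  have b_I: "b \<in> I r" using b J' J[OF r] by auto
  have F_le: "F a \<le> c a * F b" if a: "a \<in> J r" for a
    unfolding F_def sum_distrib_left
  proof (rule sum_mono)
    fix u assume "u \<in> P"
    then have "u i \<in> I i" if "i \<in> {1..n} - {r}" for i
      using J that unfolding P_def by (blast dest: PiE_mem)
    then have "u(r := b) \<in> Pi {1..n} I" using b_I by auto
    then show "normD X (wcomp Phi (u(r := a)) 1 n) powr t \<le> c a * normD X (wcomp Phi (u(r := b)) 1 n) powr t"
      using normD_replace_letter_powr[OF t _ r _ b_I, of "u(r := b)" a] a J[OF r] unfolding c_def by auto
  qed
  have e_nonneg: "e \<ge> 0"
    using removed sum_nonneg[of "J r - J' r" "\<lambda>a. (K ^ 4 * (normD X (Phi r a) / normD X (Phi r b))) powr t"]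
    by simp
  have "(\<Sum>a\<in>J r - J' r. F a) \<le> (\<Sum>a\<in>J r - J' r. c a) * F b"
    unfolding sum_distrib_right using F_le by (intro sum_mono) auto
  also have "\<dots> \<le> e * F b"
    using removed F_nonneg unfolding c_def by (rule mult_right_mono)
  also have "\<dots> \<le> e * (\<Sum>a\<in>J' r. F a)"
    using fin J'(2) b F_nonneg e_nonneg by (intro mult_left_mono member_le_sum) (auto intro: finite_subset)
  finally have "(\<Sum>a\<in>J r - J' r. F a) \<le> e * (\<Sum>a\<in>J' r. F a)" .
  moreover have "(\<Sum>a\<in>J r. F a) = (\<Sum>a\<in>J r - J' r. F a) + (\<Sum>a\<in>J' r. F a)"
    using J'(2) fin by (rule sum.subset_diff)
  ultimately show ?thesis
    unfolding Zn_J Zn_J' by (simp add: algebra_simps)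
qed

lemma Zn_cong: "(\<And>i. i \<in> {1..n} \<Longrightarrow> J i = J' i) \<Longrightarrow> Zn X J Phi n t = Zn X J' Phi n t"
  unfolding Zn_def by (intro sum.cong PiE_cong) auto

lemma Zn_le_prod_remove_letters:
  assumes t: "t \<ge> 0" and J: "\<And>i. i \<ge> 1 \<Longrightarrow> J i \<subseteq> I i" and b: "\<And>r. r \<in> {1..n} \<Longrightarrow> b r \<in> J r"
    and removed: "\<And>r. r \<in> {1..n} \<Longrightarrow>
      (\<Sum>a\<in>I r - J r. (K ^ 4 * (normD X (Phi r a) / normD X (Phi r (b r)))) powr t) \<le> e r"
  shows "Zn X I Phi n t \<le> (\<Prod>r\<in>{1..n}. 1 + e r) * Zn X J Phi n t"
proof -
  define mix where "mix s i = (if i \<le> s then J i else I i)" for s i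
  have e_nonneg: "e r \<ge> 0" if "r \<in> {1..n}" for r
    using removed[OF that] by (meson order.trans powr_ge_zero sum_nonneg)
  have "Zn X I Phi n t \<le> (\<Prod>r\<in>{1..s}. 1 + e r) * Zn X (mix s) Phi n t" if "s \<le> n" for s
    using that
  proof (induction s)
    case 0
    have "Zn X I Phi n t = Zn X (mix 0) Phi n t"
      by (rule Zn_cong) (simp add: mix_def)
    then show ?case by simp
  next
    case (Suc s)
    have "Zn X (mix s) Phi n t \<le> (1 + e (Suc s)) * Zn X (mix (Suc s)) Phi n t"
      using Suc.prems J b removed
      by (intro Zn_remove_letters[OF t, of "Suc s" _ _ _ "b (Suc s)"]) (auto simp: mix_def)
    moreover have "(\<Prod>r\<in>{1..s}. 1 + e r) \<ge> 0"
      using e_nonneg Suc.prems by (intro prod_nonneg) auto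
    ultimately have "(\<Prod>r\<in>{1..s}. 1 + e r) * Zn X (mix s) Phi n t
        \<le> (\<Prod>r\<in>{1..s}. 1 + e r) * ((1 + e (Suc s)) * Zn X (mix (Suc s)) Phi n t)"
      by (rule mult_left_mono)
    also have "\<dots> = (\<Prod>r\<in>{1..Suc s}. 1 + e r) * Zn X (mix (Suc s)) Phi n t"
      by (simp add: atLeastAtMostSuc_conv mult_ac)
    finally have "(\<Prod>r\<in>{1..s}. 1 + e r) * Zn X (mix s) Phi n t
        \<le> (\<Prod>r\<in>{1..Suc s}. 1 + e r) * Zn X (mix (Suc s)) Phi n t" .
    then show ?case using Suc by simp
  qed
  moreover have "Zn X (mix n) Phi n t = Zn X J Phi n t"
    by (rule Zn_cong) (simp add: mix_def)
  ultimately show ?thesis by (metis order_refl)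
qed

lemma Zn_pos:
  assumes "\<And>i. i \<in> {1..n} \<Longrightarrow> J i \<subseteq> I i \<and> J i \<noteq> {}"
  shows "Zn X J Phi n t > 0"
  unfolding Zn_def
proof (rule sum_pos)
  show "finite (Pi\<^sub>E {1..n} J)"
    using assms finite_I by (intro finite_PiE) (auto intro: finite_subset)
  show "Pi\<^sub>E {1..n} J \<noteq> {}"
    using assms by (simp add: PiE_eq_empty_iff)
  fix w assume "w \<in> Pi\<^sub>E {1..n} J"
  then have "w \<in> Pi {1..<1 + n} I" using assms by (force simp: PiE_iff)
  then show "normD X (wcomp Phi w 1 n) powr t > 0"
    using normD_word_pos[of 1 w n] by simp
qed

lemma Zn_mono:
  assumes "\<And>i. i \<in> {1..n} \<Longrightarrow> J i \<subseteq> I i"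
  shows "Zn X J Phi n t \<le> Zn X I Phi n t"
  unfolding Zn_def using assms finite_I
  by (intro sum_mono2 finite_PiE PiE_mono) auto

lemma lower_pressure_eq_if_removed_vanishes:
  assumes t: "t \<ge> 0" and J: "\<And>i. i \<ge> 1 \<Longrightarrow> J i \<subseteq> I i" and b: "\<And>r. r \<ge> 1 \<Longrightarrow> b r \<in> J r"
    and removed: "\<And>r. r \<ge> 1 \<Longrightarrow>
      (\<Sum>a\<in>I r - J r. (K ^ 4 * (normD X (Phi r a) / normD X (Phi r (b r)))) powr t) \<le> e r"
    and e_nonneg: "\<And>r. e r \<ge> 0" and e_lim: "e \<longlonglongrightarrow> 0"
  shows "lower_pressure X J Phi t = lower_pressure X I Phi t"
proof -
  define p where "p n = ln (Zn X J Phi n t) / real n" for n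
  define q where "q n = ln (Zn X I Phi n t) / real n" for n
  have Zn_J_pos: "Zn X J Phi n t > 0" for n
    using J b by (intro Zn_pos) auto
  have Zn_J_le: "Zn X J Phi n t \<le> Zn X I Phi n t" for n
    using J by (intro Zn_mono) auto
  have "p n \<le> q n" for n
    unfolding p_def q_def using Zn_J_pos[of n] Zn_J_le[of n] by (intro divide_right_mono) auto
  moreover have "q n \<le> p n + (\<Sum>r\<in>{1..n}. e r) / real n" for n
  proof -
    have "Zn X I Phi n t \<le> (\<Prod>r\<in>{1..n}. 1 + e r) * Zn X J Phi n t"
      using b removed by (intro Zn_le_prod_remove_letters[OF t J]) auto
    then have "ln (Zn X I Phi n t) \<le> ln ((\<Prod>r\<in>{1..n}. 1 + e r) * Zn X J Phi n t)"
      using less_le_trans[OF Zn_J_pos Zn_J_le] by (rule ln_mono)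
    also have "\<dots> = (\<Sum>r\<in>{1..n}. ln (1 + e r)) + ln (Zn X J Phi n t)"
      using e_nonneg Zn_J_pos
      by (simp add: ln_mult_pos prod_pos add_pos_nonneg ln_prod[of _ "\<lambda>r. 1 + e r"] add_nonneg_eq_0_iff)
    also have "\<dots> \<le> (\<Sum>r\<in>{1..n}. e r) + ln (Zn X J Phi n t)"
      using e_nonneg by (intro add_right_mono sum_mono ln_add_one_self_le_self)
    finally show ?thesis
      unfolding p_def q_def by (simp add: add_divide_distrib[symmetric] divide_right_mono add.commute)
  qed
  moreover have "(\<lambda>n. (\<Sum>r\<in>{1..n}. e r) / real n) \<longlonglongrightarrow> 0"
    using e_lim e_nonneg by (rule cesaro_mean_tendsto_zero)
  ultimately have "liminf (\<lambda>n. ereal (q n)) = liminf (\<lambda>n. ereal (p n))"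
    by (intro liminf_ereal_eq_if_gap_tendsto_zero always_eventually allI)
  then show ?thesis
    unfolding lower_pressure_def p_def q_def by simp
qed

subsection \<open>Pruning the small letters\<close>

definition pruned :: "(nat \<Rightarrow> real) \<Rightarrow> nat \<Rightarrow> 'i set" where
  "pruned c n = {a \<in> I n. Max ((\<lambda>b. normD X (Phi n b)) ` I n) \<le> c n * normD X (Phi n a)}"

lemma normD_le_Max: "n \<ge> 1 \<Longrightarrow> a \<in> I n \<Longrightarrow> normD X (Phi n a) \<le> Max ((\<lambda>b. normD X (Phi n b)) ` I n)"
  using finite_I by (intro Max_ge) auto

lemma exists_top_letter: "n \<ge> 1 \<Longrightarrow> \<exists>a\<in>I n. normD X (Phi n a) = Max ((\<lambda>b. normD X (Phi n b)) ` I n)"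
  using Max_in[of "(\<lambda>b. normD X (Phi n b)) ` I n"] finite_I I_nonempty by fastforce

lemma top_letter_in_pruned:
  assumes "n \<ge> 1" "c n \<ge> 1" "a \<in> I n" "normD X (Phi n a) = Max ((\<lambda>b. normD X (Phi n b)) ` I n)"
  shows "a \<in> pruned c n"
  unfolding pruned_def using assms normD_letter_pos[of n a] by simp

lemma rho_pruned_le:
  assumes n: "n \<ge> 1" and c: "c n \<ge> 1"
  shows "rho X (pruned c) Phi n \<le> c n"
proof -
  let ?M = "Max ((\<lambda>b. normD X (Phi n b)) ` I n)"
  let ?S = "{normD X (Phi n a) / normD X (Phi n b) | a b. a \<in> pruned c n \<and> b \<in> pruned c n}"
  have fin: "finite (pruned c n)" using finite_I[OF n] unfolding pruned_def by simp
  have "?S = (\<lambda>(a, b). normD X (Phi n a) / normD X (Phi n b)) ` (pruned c n \<times> pruned c n)"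
    by auto
  then have "finite ?S" using fin by simp
  moreover have "?S \<noteq> {}"
    using exists_top_letter[OF n] top_letter_in_pruned[of n c, OF n c] by blast
  moreover have "normD X (Phi n a) / normD X (Phi n b) \<le> c n"
    if "a \<in> pruned c n" "b \<in> pruned c n" for a b
  proof -
    have "normD X (Phi n a) \<le> ?M" "?M \<le> c n * normD X (Phi n b)" "normD X (Phi n b) > 0"
      using that normD_le_Max[OF n] normD_letter_pos[OF n] unfolding pruned_def by auto
    then show ?thesis by (simp add: divide_le_eq)
  qed
  ultimately show ?thesis
    unfolding rho_def by (intro Max.boundedI) auto
qed

lemma removed_by_pruning_le:
  assumes n: "n \<ge> 1" and c: "c n > 0" and t: "t \<ge> 0" and Q: "Q \<ge> 0"
    and top: "normD X (Phi n b) = Max ((\<lambda>b. normD X (Phi n b)) ` I n)"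
  shows "(\<Sum>a\<in>I n - pruned c n. (Q * (normD X (Phi n a) / normD X (Phi n b))) powr t)
    \<le> real (card (I n)) * (Q / c n) powr t"
proof -
  have "(Q * (normD X (Phi n a) / normD X (Phi n b))) powr t \<le> (Q / c n) powr t"
    if a: "a \<in> I n - pruned c n" for a
  proof (rule powr_mono2[OF t])
    have lt: "c n * normD X (Phi n a) < normD X (Phi n b)"
      using a top unfolding pruned_def by auto
    moreover have "0 < c n * normD X (Phi n a)"
      using c normD_letter_pos[OF n, of a] a by simp
    ultimately have "normD X (Phi n a) / normD X (Phi n b) \<le> 1 / c n"
      using c by (simp add: field_simps)
    from mult_left_mono[OF this Q]
    show "Q * (normD X (Phi n a) / normD X (Phi n b)) \<le> Q / c n" by simp
    show "0 \<le> Q * (normD X (Phi n a) / normD X (Phi n b))"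
      using Q top normD_letter_pos[OF n, of a] a normD_le_Max[OF n, of a]
      by (intro mult_nonneg_nonneg divide_nonneg_nonneg) auto
  qed
  then have "(\<Sum>a\<in>I n - pruned c n. (Q * (normD X (Phi n a) / normD X (Phi n b))) powr t)
      \<le> real (card (I n - pruned c n)) * (Q / c n) powr t"
    by (rule sum_bounded_above)
  also have "\<dots> \<le> real (card (I n)) * (Q / c n) powr t"
    using finite_I[OF n] by (intro mult_right_mono) (auto intro: card_mono)
  finally show ?thesis .
qed

lemma exists_pruned_subsystem:
  assumes t0: "t0 > 0" and \<alpha>: "\<And>n. n \<ge> 1 \<Longrightarrow> \<alpha> n \<ge> 1" and \<alpha>_lim: "filterlim \<alpha> at_top sequentially"
  shows "\<exists>J. (\<forall>n\<ge>1. J n \<subseteq> I n \<and> J n \<noteq> {}) \<and>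
    (\<forall>t\<ge>t0. lower_pressure X J Phi t = lower_pressure X I Phi t) \<and>
    (\<forall>n\<ge>1. rho X J Phi n \<le> \<alpha> n * real (card (I n)) powr (1 / t0))"
proof -
  define c where "c n = \<alpha> n * real (card (I n)) powr (1 / t0)" for n
  have c: "c n \<ge> 1" if "n \<ge> 1" for n
    unfolding c_def using \<alpha>[OF that] finite_I[OF that] I_nonempty[OF that] t0 by (rule one_le_mult_card_powr)
  obtain top where top: "\<And>n. n \<ge> 1 \<Longrightarrow> top n \<in> I n \<and> normD X (Phi n (top n)) = Max ((\<lambda>b. normD X (Phi n b)) ` I n)"
    using exists_top_letter by metis
  have top_pruned: "top n \<in> pruned c n" if "n \<ge> 1" for n
    using top_letter_in_pruned[of n c, OF that c[OF that]] top[OF that] by blast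
  have pruned_sub: "pruned c n \<subseteq> I n" for n
    unfolding pruned_def by blast
  have pressure: "lower_pressure X (pruned c) Phi t = lower_pressure X I Phi t" if t: "t \<ge> t0" for t
  proof (rule lower_pressure_eq_if_removed_vanishes[OF _ pruned_sub top_pruned])
    show "0 \<le> t" using t t0 by simp
    show "(\<Sum>a\<in>I r - pruned c r. (K ^ 4 * (normD X (Phi r a) / normD X (Phi r (top r)))) powr t)
        \<le> (K ^ 4 / \<alpha> r) powr t" if r: "r \<ge> 1" for r
    proof -
      have "(\<Sum>a\<in>I r - pruned c r. (K ^ 4 * (normD X (Phi r a) / normD X (Phi r (top r)))) powr t)
          \<le> real (card (I r)) * (K ^ 4 / c r) powr t"
        using t t0 K_ge_1 top[OF r] c[OF r] by (intro removed_by_pruning_le[OF r]) auto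
      also have "\<dots> = real (card (I r)) * ((K ^ 4 / \<alpha> r) / real (card (I r)) powr (1 / t0)) powr t"
        unfolding c_def by simp
      also have "\<dots> \<le> (K ^ 4 / \<alpha> r) powr t"
        using finite_I[OF r] I_nonempty[OF r] \<alpha>[OF r] K_ge_1 t0 t
        by (intro mult_powr_div_root_le) (auto simp: Suc_leI card_gt_0_iff)
      finally show ?thesis .
    qed
    show "(\<lambda>r. (K ^ 4 / \<alpha> r) powr t) \<longlonglongrightarrow> 0"
    proof (rule tendsto_zero_powrI[where b=t])
      show "(\<lambda>r. K ^ 4 / \<alpha> r) \<longlonglongrightarrow> 0"
        using \<alpha>_lim by (intro tendsto_divide_0[OF tendsto_const] filterlim_at_top_imp_at_infinity)
      show "eventually (\<lambda>r. 0 \<le> K ^ 4 / \<alpha> r) sequentially"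
        unfolding eventually_sequentially using \<alpha> K_ge_1
        by (intro exI[of _ 1] allI impI divide_nonneg_nonneg) (auto intro: order.trans[OF zero_le_one])
    qed (use t t0 in simp_all)
  qed simp_all
  show ?thesis
  proof (intro exI[of _ "pruned c"] conjI allI impI)
    fix n :: nat assume n: "n \<ge> 1"
    show "pruned c n \<subseteq> I n" by (rule pruned_sub)
    show "pruned c n \<noteq> {}" using top_pruned[OF n] by blast
    show "rho X (pruned c) Phi n \<le> \<alpha> n * real (card (I n)) powr (1 / t0)"
      using rho_pruned_le[of n c, OF n c[OF n]] unfolding c_def .
  qed (rule pressure)
qed

end

text \<open>The hypotheses do not exclude X = {}, where every normD is the junk value Sup {}.\<close>

lemma rho_empty_space:
  assumes "I n \<noteq> {}"
  shows "rho {} I Phi n \<le> 1"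
proof -
  have "{normD {} (Phi n a) / normD {} (Phi n b) | a b. a \<in> I n \<and> b \<in> I n} = {Sup {} / Sup {} :: real}"
    using assms by (auto simp: normD_def)
  then show ?thesis by (simp add: rho_def)
qed

lemma finite_ncifs_if_NCIFS:
  assumes ncifs: "NCIFS X I Phi" and finite: "\<forall>j\<ge>1. finite (I j)" and "X \<noteq> {}"
  shows "\<exists>V K. finite_ncifs X I Phi V K"
proof -
  have levels: "\<forall>j\<ge>1. I j \<noteq> {} \<and> countable (I j) \<and> (\<forall>i\<in>I j. Phi j i ` X \<subseteq> X)"
    and "\<exists>V. open V \<and> connected V \<and> X \<subseteq> V \<and>
        (\<forall>j\<ge>1. \<forall>i\<in>I j. conformal_C1_into V (Phi j i)) \<and>
        (\<exists>K\<ge>1. \<forall>k\<ge>1. \<forall>m\<ge>1. \<forall>w. (\<forall>i. k \<le> i \<and> i < k + m \<longrightarrow> w i \<in> I i) \<longrightarrow>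
            (\<forall>x\<in>V. \<forall>y\<in>V. conf_deriv (wcomp Phi w k m) x \<le> K * conf_deriv (wcomp Phi w k m) y))"
    using ncifs unfolding NCIFS_def by simp_all
  then obtain V K where "X \<subseteq> V" "K \<ge> 1" "\<forall>j\<ge>1. \<forall>i\<in>I j. conformal_C1_into V (Phi j i)"
    and "\<forall>k\<ge>1. \<forall>m\<ge>1. \<forall>w. (\<forall>i. k \<le> i \<and> i < k + m \<longrightarrow> w i \<in> I i) \<longrightarrow>
            (\<forall>x\<in>V. \<forall>y\<in>V. conf_deriv (wcomp Phi w k m) x \<le> K * conf_deriv (wcomp Phi w k m) y)"
    by blast
  then have "finite_ncifs X I Phi V K"
    using levels finite \<open>X \<noteq> {}\<close>
    by unfold_locales (simp_all add: conformal_self_map_if_conformal_C1_into)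
  then show ?thesis by blast
qed

theorem corollary5p2:
  fixes X :: "'a::euclidean_space set" and I :: "nat \<Rightarrow> 'i set"
    and Phi :: "nat \<Rightarrow> 'i \<Rightarrow> 'a \<Rightarrow> 'a" and t0 :: real and \<alpha> :: "nat \<Rightarrow> real"
  assumes "compact X" and "X = closure (interior X)" and "smooth_boundary X \<or> convex X"
    and "NCIFS X I Phi" and "\<forall>j\<ge>1. finite (I j)"
    and "t0 > 0" and "\<forall>n\<ge>1. \<alpha> n \<ge> 1" and "filterlim \<alpha> at_top sequentially"
  shows "\<exists>If. (\<forall>n\<ge>1. If n \<subseteq> I n \<and> If n \<noteq> {}) \<and>
    (\<forall>t\<ge>t0. lower_pressure X If Phi t = lower_pressure X I Phi t) \<and>
    (\<forall>n\<ge>1. rho X If Phi n \<le> \<alpha> n * real (card (I n)) powr (1 / t0))"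
proof (cases "X = {}")
  case True
  have I_nonempty: "\<forall>n\<ge>1. I n \<noteq> {}" using assms(4) unfolding NCIFS_def by simp
  have "rho X I Phi n \<le> \<alpha> n * real (card (I n)) powr (1 / t0)" if n: "n \<ge> 1" for n
  proof -
    have "rho X I Phi n \<le> 1" using rho_empty_space[of I n Phi] I_nonempty n True by simp
    also have "1 \<le> \<alpha> n * real (card (I n)) powr (1 / t0)"
      using assms(5-7) I_nonempty n by (intro one_le_mult_card_powr) auto
    finally show ?thesis .
  qed
  then show ?thesis
    using I_nonempty by (intro exI[of _ I]) simp
next
  case False
  then obtain V K where "finite_ncifs X I Phi V K"
    using finite_ncifs_if_NCIFS[OF assms(4,5)] by blast
  then show ?thesis
    by (rule finite_ncifs.exists_pruned_subsystem) (use assms(6-8) in simp_all)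
qed

end
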